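(* As operators on the tensor product of any three finite-dimensional spin representations of $U_q(\mathfrak{su}_2)$, $$Q_{23}:=1\otimes\Delta(Q)=\mathrm{Tr}_a\big(L^+_{a1}L^+_{a2}L^+_{a3}L^-_{a3}L^-_{a2}(L^+_{a1})^{-1}M_a\big),$$ where $Q=(q-q^{-1})^2FE+q^{2H+1}+q^{-2H-1}$.
   Context: $q$ generic complex, $U_q(\mathfrak{su}_2)$ generated by $E,F,q^H$ with $q^HE=qEq^H$, $q^HF=q^{-1}Fq^H$, $[E,F]=(q^{2H}-q^{-2H})/(q-q^{-1})$; coproduct $\Delta(E)=E\otimes q^{-H}+q^H\otimes E$, $\Delta(F)=F\otimes q^{-H}+q^H\otimes F$, $\Delta(q^H)=q^H\otimes q^H$. Auxiliary space $a\cong\mathbb{C}^2$ traced with $\mathrm{Tr}_a$. $L^-=\begin{pmatrix}q^H&0\\ \frac{q-q^{-1}}{q^{1/2}}E&q^{-H}\end{pmatrix}$, $L^+=\begin{pmatrix}q^H&\frac{q-q^{-1}}{q^{1/2}}F\\0&q^{-H}\end{pmatrix}$; $L^\pm_{ai}$ is the matrix on space $a$ with entries in the $i$-th tensor factor; $M_a=\mathrm{diag}(q,q^{-1})$ on space $a$. *)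

theory Defs
  imports Complex_Main
begin

(* Spin representations of U_q(su_2), concretely.
   Spin n/2 representation: basis e_0..e_n, e_k has weight m = k - n/2.
   s is a fixed square root of q (q^(1/2)), so q^H e_k = s^(2k-n) e_k. *)

type_synonym op1 = "nat \<Rightarrow> nat \<Rightarrow> complex"
type_synonym idx3 = "nat \<times> nat \<times> nat"
type_synonym op3 = "idx3 \<Rightarrow> idx3 \<Rightarrow> complex"
type_synonym idxA = "nat \<times> idx3"
type_synonym opA = "idxA \<Rightarrow> idxA \<Rightarrow> complex"

definition qnum :: "complex \<Rightarrow> int \<Rightarrow> complex" where
  "qnum q x = (q powi x - q powi (-x)) / (q - inverse q)"

text \<open>q^(e H) on the spin n/2 representation (e an integer exponent).\<close>
definition Kop :: "complex \<Rightarrow> nat \<Rightarrow> int \<Rightarrow> op1" where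
  "Kop s n e i j = (if i = j then s powi (e * (2 * int i - int n)) else 0)"

text \<open>E e_j = e_(j+1) (e_n is killed since e_(n+1) lies outside the space).\<close>
definition Eop :: "nat \<Rightarrow> op1" where
  "Eop n i j = (if i = Suc j then 1 else 0)"

definition Fop :: "complex \<Rightarrow> nat \<Rightarrow> op1" where
  "Fop q n i j = (if j = Suc i then qnum q (int j) * qnum q (int n - int j + 1) else 0)"

definition Jset :: "idx3 \<Rightarrow> idx3 set" where
  "Jset ns = (case ns of (n1, n2, n3) \<Rightarrow> {0..n1} \<times> {0..n2} \<times> {0..n3})"

definition Aset :: "idx3 \<Rightarrow> idxA set" where
  "Aset ns = {0..1::nat} \<times> Jset ns"

definition omult :: "'i set \<Rightarrow> ('i \<Rightarrow> 'i \<Rightarrow> complex) \<Rightarrow> ('i \<Rightarrow> 'i \<Rightarrow> complex) \<Rightarrow> ('i \<Rightarrow> 'i \<Rightarrow> complex)" where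
  "omult I A B x y = (\<Sum>z\<in>I. A x z * B z y)"

definition oid :: "'i set \<Rightarrow> ('i \<Rightarrow> 'i \<Rightarrow> complex)" where
  "oid I x y = (if x = y \<and> x \<in> I then 1 else 0)"

definition oadd :: "('i \<Rightarrow> 'i \<Rightarrow> complex) \<Rightarrow> ('i \<Rightarrow> 'i \<Rightarrow> complex) \<Rightarrow> ('i \<Rightarrow> 'i \<Rightarrow> complex)" where
  "oadd A B x y = A x y + B x y"

definition osc :: "complex \<Rightarrow> ('i \<Rightarrow> 'i \<Rightarrow> complex) \<Rightarrow> ('i \<Rightarrow> 'i \<Rightarrow> complex)" where
  "osc c A x y = c * A x y"

definition oinv :: "'i set \<Rightarrow> ('i \<Rightarrow> 'i \<Rightarrow> complex) \<Rightarrow> ('i \<Rightarrow> 'i \<Rightarrow> complex)" where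
  "oinv I A = (THE B. (\<forall>x y. B x y \<noteq> 0 \<longrightarrow> x \<in> I \<and> y \<in> I)
                   \<and> omult I B A = oid I \<and> omult I A B = oid I)"

definition emb1 :: "op1 \<Rightarrow> op3" where
  "emb1 A x y = (case x of (a, b, c) \<Rightarrow> case y of (a', b', c') \<Rightarrow>
      A a a' * (if b = b' \<and> c = c' then 1 else 0))"
definition emb2 :: "op1 \<Rightarrow> op3" where
  "emb2 A x y = (case x of (a, b, c) \<Rightarrow> case y of (a', b', c') \<Rightarrow>
      A b b' * (if a = a' \<and> c = c' then 1 else 0))"
definition emb3 :: "op1 \<Rightarrow> op3" where
  "emb3 A x y = (case x of (a, b, c) \<Rightarrow> case y of (a', b', c') \<Rightarrow>
      A c c' * (if a = a' \<and> b = b' then 1 else 0))"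

text \<open>A 2x2 matrix (rows/columns 0,1 of auxiliary space a) with entries in op3,
  viewed as an operator on a (x) V1 (x) V2 (x) V3.\<close>
definition aux :: "(nat \<Rightarrow> nat \<Rightarrow> op3) \<Rightarrow> opA" where
  "aux m x y = (case x of (a, u) \<Rightarrow> case y of (b, v) \<Rightarrow> m a b u v)"

definition trA :: "opA \<Rightarrow> op3" where
  "trA A u v = (\<Sum>a\<in>{0..1::nat}. A (a, u) (a, v))"

definition Lplus :: "complex \<Rightarrow> complex \<Rightarrow> (op1 \<Rightarrow> op3) \<Rightarrow> nat \<Rightarrow> opA" where
  "Lplus q s emb n = aux (\<lambda>a b.
     if a = 0 \<and> b = 0 then emb (Kop s n 1)
     else if a = 0 \<and> b = 1 then osc ((q - inverse q) / s) (emb (Fop q n))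
     else if a = 1 \<and> b = 1 then emb (Kop s n (-1))
     else (\<lambda>_ _. 0))"

definition Lminus :: "complex \<Rightarrow> complex \<Rightarrow> (op1 \<Rightarrow> op3) \<Rightarrow> nat \<Rightarrow> opA" where
  "Lminus q s emb n = aux (\<lambda>a b.
     if a = 0 \<and> b = 0 then emb (Kop s n 1)
     else if a = 1 \<and> b = 0 then osc ((q - inverse q) / s) (emb (Eop n))
     else if a = 1 \<and> b = 1 then emb (Kop s n (-1))
     else (\<lambda>_ _. 0))"

definition Ma :: "complex \<Rightarrow> opA" where
  "Ma q = aux (\<lambda>a b. if a = b then osc (if a = 0 then q else inverse q) (\<lambda>u v. if u = v then 1 else 0)
                     else (\<lambda>_ _. 0))"

text \<open>1 (x) Delta(Q) on V1 (x) V2 (x) V3, with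
  Q = (q-q^-1)^2 F E + q^(2H+1) + q^(-2H-1), Delta extended multiplicatively from
  Delta(E) = E (x) q^-H + q^H (x) E, Delta(F) = F (x) q^-H + q^H (x) F, Delta(q^H) = q^H (x) q^H.\<close>
definition Q23 :: "complex \<Rightarrow> complex \<Rightarrow> idx3 \<Rightarrow> op3" where
  "Q23 q s ns = (case ns of (n1, n2, n3) \<Rightarrow>
     let J = Jset ns;
         K = omult J (emb2 (Kop s n2 1)) (emb3 (Kop s n3 1));
         Ki = omult J (emb2 (Kop s n2 (-1))) (emb3 (Kop s n3 (-1)));
         DE = oadd (omult J (emb2 (Eop n2)) (emb3 (Kop s n3 (-1))))
              (omult J (emb2 (Kop s n2 1)) (emb3 (Eop n3)));
         DF = oadd (omult J (emb2 (Fop q n2)) (emb3 (Kop s n3 (-1))))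
              (omult J (emb2 (Kop s n2 1)) (emb3 (Fop q n3)))
     in oadd (oadd (osc ((q - inverse q)^2) (omult J DF DE)) (osc q (omult J K K)))
           (osc (inverse q) (omult J Ki Ki)))"

definition transfer_RHS :: "complex \<Rightarrow> complex \<Rightarrow> idx3 \<Rightarrow> op3" where
  "transfer_RHS q s ns = (case ns of (n1, n2, n3) \<Rightarrow>
     let I = Aset ns; m = omult I in
     trA (m (Lplus q s emb1 n1) (m (Lplus q s emb2 n2) (m (Lplus q s emb3 n3)
          (m (Lminus q s emb3 n3) (m (Lminus q s emb2 n2)
          (m (oinv I (Lplus q s emb1 n1)) (Ma q))))))))"

end

theory Submission
  imports Defs
begin

text \<open>
  Only the first factor is conjugated in the transfer matrix.  The entries of \<open>L\<^sup>+\<^sub>a\<^sub>1\<close> and of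
  its inverse act on \<open>V\<^sub>1\<close>, so they commute with the entries of
  \<open>X = L\<^sup>+\<^sub>a\<^sub>2 L\<^sup>+\<^sub>a\<^sub>3 L\<^sup>-\<^sub>a\<^sub>3 L\<^sup>-\<^sub>a\<^sub>2\<close>, which act on \<open>V\<^sub>2 \<otimes> V\<^sub>3\<close>; and since \<open>K F = q\<^sup>-\<^sup>1 F K\<close> they satisfy the
  quantum-trace identity \<open>\<Sum>\<^sub>a m\<^sub>a (L\<^sup>+)\<^sub>a\<^sub>b ((L\<^sup>+)\<^sup>-\<^sup>1)\<^sub>c\<^sub>a = \<delta>\<^sub>b\<^sub>c m\<^sub>b\<close> for \<open>M\<^sub>a = diag(m\<^sub>0, m\<^sub>1) = diag(q, q\<^sup>-\<^sup>1)\<close>.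
  Together these give \<open>Tr\<^sub>a(L\<^sup>+\<^sub>a\<^sub>1 X (L\<^sup>+\<^sub>a\<^sub>1)\<^sup>-\<^sup>1 M\<^sub>a) = Tr\<^sub>a(X M\<^sub>a)\<close>.  The remaining trace is
  \<open>1 \<otimes> \<Delta>(Q)\<close> by expanding the \<open>2 \<times> 2\<close> products and normal ordering with \<open>K K\<^sup>-\<^sup>1 = 1\<close> and
  \<open>K F = q\<^sup>-\<^sup>1 F K\<close>.

  Operators are kernels on all of \<open>\<nat>\<^sup>3\<close>; restricting them to the basis indices of
  \<open>V\<^sub>1 \<otimes> V\<^sub>2 \<otimes> V\<^sub>3\<close> makes \<open>oid\<close> a unit for composition and turns the embeddings
  \<open>emb1\<close>, \<open>emb2\<close>, \<open>emb3\<close> into honest tensor products.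
\<close>

section \<open>Operators on a finite index set\<close>

type_synonym 'i oper = "'i \<Rightarrow> 'i \<Rightarrow> complex"

definition orestrict :: "'i set \<Rightarrow> 'i oper \<Rightarrow> 'i oper" where
  "orestrict I A x y = (if x \<in> I \<and> y \<in> I then A x y else 0)"

lemma omult_assoc: "omult I (omult I A B) C = omult I A (omult I B C)"
proof (intro ext)
  fix x y
  have "omult I (omult I A B) C x y = (\<Sum>z\<in>I. \<Sum>w\<in>I. A x w * B w z * C z y)"
    by (simp add: omult_def sum_distrib_right)
  also have "\<dots> = (\<Sum>w\<in>I. \<Sum>z\<in>I. A x w * B w z * C z y)"
    by (rule sum.swap)
  also have "\<dots> = omult I A (omult I B C) x y"
    by (simp add: omult_def sum_distrib_left mult.assoc)
  finally show "omult I (omult I A B) C x y = omult I A (omult I B C) x y" .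
qed

lemma omult_oadd_left: "omult I (oadd A B) C = oadd (omult I A C) (omult I B C)"
  by (intro ext) (simp add: omult_def oadd_def distrib_right sum.distrib)

lemma omult_oadd_right: "omult I C (oadd A B) = oadd (omult I C A) (omult I C B)"
  by (intro ext) (simp add: omult_def oadd_def distrib_left sum.distrib)

lemma omult_osc_left: "omult I (osc c A) B = osc c (omult I A B)"
  by (intro ext) (simp add: omult_def osc_def sum_distrib_left mult.assoc)

lemma omult_osc_right: "omult I A (osc c B) = osc c (omult I A B)"
  by (intro ext) (simp add: omult_def osc_def sum_distrib_left mult.left_commute)

lemma omult_zero_left: "omult I (\<lambda>_ _. 0) B = (\<lambda>_ _. 0)"
  by (intro ext) (simp add: omult_def)

lemma omult_zero_right: "omult I A (\<lambda>_ _. 0) = (\<lambda>_ _. 0)"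
  by (intro ext) (simp add: omult_def)

lemma oadd_zero_left: "oadd (\<lambda>_ _. 0) A = A"
  by (intro ext) (simp add: oadd_def)

lemma oadd_zero_right: "oadd A (\<lambda>_ _. 0) = A"
  by (intro ext) (simp add: oadd_def)

lemma osc_osc: "osc c (osc d A) = osc (c * d) A"
  by (intro ext) (simp add: osc_def)

lemma oadd_osc_osc: "oadd (osc c A) (osc d A) = osc (c + d) A"
  by (intro ext) (simp add: oadd_def osc_def distrib_right)

lemma osc_oadd: "osc c (oadd A B) = oadd (osc c A) (osc c B)"
  by (intro ext) (simp add: oadd_def osc_def distrib_left)

lemma osc_eq_zero: "c = 0 \<Longrightarrow> osc c A = (\<lambda>_ _. 0)"
  by (intro ext) (simp add: osc_def)

lemma osc_zero: "osc c (\<lambda>_ _. 0) = (\<lambda>_ _. 0)"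
  by (intro ext) (simp add: osc_def)

lemma omult_chain: "omult I A B = C \<Longrightarrow> omult I A (omult I B X) = omult I C X"
  by (simp add: omult_assoc[symmetric])

lemma orestrict_omult: "orestrict I (omult I A B) = omult I (orestrict I A) (orestrict I B)"
  by (intro ext) (auto simp: omult_def orestrict_def intro!: sum.cong)

lemma orestrict_oadd: "orestrict I (oadd A B) = oadd (orestrict I A) (orestrict I B)"
  by (intro ext) (simp add: oadd_def orestrict_def)

lemma orestrict_osc: "orestrict I (osc c A) = osc c (orestrict I A)"
  by (intro ext) (simp add: osc_def orestrict_def)

lemma orestrict_zero: "orestrict I (\<lambda>_ _. 0) = (\<lambda>_ _. 0)"
  by (intro ext) (simp add: orestrict_def)

lemma orestrict_idem: "orestrict I (orestrict I A) = orestrict I A"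
  by (intro ext) (simp add: orestrict_def)

lemma orestrict_oid: "orestrict I (oid I) = oid I"
  by (intro ext) (simp add: orestrict_def oid_def)

lemma omult_oid_left:
  assumes "finite I"
  shows "omult I (oid I) (orestrict I A) = orestrict I A"
proof (intro ext)
  fix x y
  have "omult I (oid I) (orestrict I A) x y = (\<Sum>z\<in>I. if x = z then orestrict I A x y else 0)"
    unfolding omult_def by (rule sum.cong) (auto simp: oid_def orestrict_def)
  then show "omult I (oid I) (orestrict I A) x y = orestrict I A x y"
    using assms by (simp add: orestrict_def)
qed

lemma omult_oid_right:
  assumes "finite I"
  shows "omult I (orestrict I A) (oid I) = orestrict I A"
proof (intro ext)
  fix x y
  have "omult I (orestrict I A) (oid I) x y = (\<Sum>z\<in>I. if y = z then orestrict I A x y else 0)"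
    unfolding omult_def by (rule sum.cong) (auto simp: oid_def orestrict_def)
  then show "omult I (orestrict I A) (oid I) x y = orestrict I A x y"
    using assms by (simp add: orestrict_def)
qed

lemma oid_idem: "finite I \<Longrightarrow> omult I (oid I) (oid I) = oid I"
  using omult_oid_left[of I "oid I"] by (simp add: orestrict_oid)

lemma oinv_eqI:
  assumes "finite I" and supp: "orestrict I B = B"
    and left: "omult I B A = oid I" and right: "omult I A B = oid I"
  shows "oinv I A = B"
  unfolding oinv_def
proof (rule the_equality)
  have "\<forall>x y. B x y \<noteq> 0 \<longrightarrow> x \<in> I \<and> y \<in> I"
    using supp by (metis orestrict_def)
  then show "(\<forall>x y. B x y \<noteq> 0 \<longrightarrow> x \<in> I \<and> y \<in> I) \<and> omult I B A = oid I \<and> omult I A B = oid I"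
    using left right by blast
next
  fix B' assume B': "(\<forall>x y. B' x y \<noteq> 0 \<longrightarrow> x \<in> I \<and> y \<in> I) \<and> omult I B' A = oid I \<and> omult I A B' = oid I"
  then have "orestrict I B' = B'"
    by (intro ext) (auto simp: orestrict_def)
  then have "B' = omult I B' (oid I)"
    using omult_oid_right[OF \<open>finite I\<close>, of B'] by simp
  also have "\<dots> = omult I (omult I B' A) B"
    using right by (simp add: omult_assoc)
  also have "\<dots> = B"
    using B' omult_oid_left[OF \<open>finite I\<close>, of B] supp by simp
  finally show "B' = B" .
qed

lemma oinv_orestrict:
  assumes "\<And>x z. x \<notin> I \<Longrightarrow> z \<in> I \<Longrightarrow> A x z = 0"
    and "\<And>z y. z \<in> I \<Longrightarrow> y \<notin> I \<Longrightarrow> A z y = 0"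
  shows "oinv I A = oinv I (orestrict I A)"
proof -
  have "omult I B A = omult I B (orestrict I A)" for B
    using assms(2) by (intro ext) (auto simp: omult_def orestrict_def intro!: sum.cong)
  moreover have "omult I A B = omult I (orestrict I A) B" for B
    using assms(1) by (intro ext) (auto simp: omult_def orestrict_def intro!: sum.cong)
  ultimately show ?thesis
    unfolding oinv_def by simp
qed


section \<open>Tensor products\<close>

definition otensor :: "'a oper \<Rightarrow> 'b oper \<Rightarrow> ('a \<times> 'b) oper" where
  "otensor A B x y = A (fst x) (fst y) * B (snd x) (snd y)"

lemma otensor_omult:
  assumes "finite I" "finite J"
  shows "omult (I \<times> J) (otensor A B) (otensor A' B') = otensor (omult I A A') (omult J B B')"
proof (intro ext)
  fix x y :: "'a \<times> 'b"
  have "omult (I \<times> J) (otensor A B) (otensor A' B') x y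
      = (\<Sum>z\<in>I. \<Sum>w\<in>J. (A (fst x) z * A' z (fst y)) * (B (snd x) w * B' w (snd y)))"
    by (simp add: omult_def otensor_def sum.cartesian_product case_prod_unfold mult_ac)
  also have "\<dots> = otensor (omult I A A') (omult J B B') x y"
    by (simp add: omult_def otensor_def sum_product)
  finally show "omult (I \<times> J) (otensor A B) (otensor A' B') x y = otensor (omult I A A') (omult J B B') x y" .
qed

lemma otensor_osc_left: "otensor (osc c A) B = osc c (otensor A B)"
  by (intro ext) (simp add: otensor_def osc_def)

lemma otensor_osc_right: "otensor A (osc c B) = osc c (otensor A B)"
  by (intro ext) (simp add: otensor_def osc_def)

lemma otensor_oadd_left: "otensor (oadd A A') B = oadd (otensor A B) (otensor A' B)"
  by (intro ext) (simp add: otensor_def oadd_def distrib_right)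

lemma otensor_oadd_right: "otensor A (oadd B B') = oadd (otensor A B) (otensor A B')"
  by (intro ext) (simp add: otensor_def oadd_def distrib_left)

lemma otensor_zero_left: "otensor (\<lambda>_ _. 0) B = (\<lambda>_ _. 0)"
  by (intro ext) (simp add: otensor_def)

lemma otensor_zero_right: "otensor A (\<lambda>_ _. 0) = (\<lambda>_ _. 0)"
  by (intro ext) (simp add: otensor_def)

lemma orestrict_otensor: "orestrict (I \<times> J) (otensor A B) = otensor (orestrict I A) (orestrict J B)"
  by (intro ext) (auto simp: orestrict_def otensor_def mem_Times_iff)

lemma oid_Times: "oid (I \<times> J) = otensor (oid I) (oid J)"
  by (intro ext) (auto simp: oid_def otensor_def mem_Times_iff prod_eq_iff)

lemma otensor_oid_commute:
  assumes "finite I" "finite J" "orestrict I A = A" "orestrict J B = B"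
  shows "omult (I \<times> J) (otensor A (oid J)) (otensor (oid I) B)
       = omult (I \<times> J) (otensor (oid I) B) (otensor A (oid J))"
  using omult_oid_left[of I A] omult_oid_right[of I A] omult_oid_left[of J B] omult_oid_right[of J B]
  by (simp add: otensor_omult assms)


section \<open>Block matrices over the auxiliary space\<close>

definition block2 :: "'i oper \<Rightarrow> 'i oper \<Rightarrow> 'i oper \<Rightarrow> 'i oper \<Rightarrow> nat \<Rightarrow> nat \<Rightarrow> 'i oper" where
  "block2 A00 A01 A10 A11 a b =
     (if a = 0 \<and> b = 0 then A00 else if a = 0 \<and> b = 1 then A01
      else if a = 1 \<and> b = 0 then A10 else if a = 1 \<and> b = 1 then A11 else (\<lambda>_ _. 0))"

definition bmult :: "'i set \<Rightarrow> (nat \<Rightarrow> nat \<Rightarrow> 'i oper) \<Rightarrow> (nat \<Rightarrow> nat \<Rightarrow> 'i oper) \<Rightarrow> nat \<Rightarrow> nat \<Rightarrow> 'i oper" where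
  "bmult K A B a c = oadd (omult K (A a 0) (B 0 c)) (omult K (A a 1) (B 1 c))"

definition btrace :: "(nat \<Rightarrow> nat \<Rightarrow> 'i oper) \<Rightarrow> 'i oper" where
  "btrace A = oadd (A 0 0) (A 1 1)"

lemma block2_simps [simp]:
  "block2 A00 A01 A10 A11 0 0 = A00" "block2 A00 A01 A10 A11 0 1 = A01"
  "block2 A00 A01 A10 A11 1 0 = A10" "block2 A00 A01 A10 A11 1 1 = A11"
  "block2 A00 A01 A10 A11 0 (Suc 0) = A01"
  "block2 A00 A01 A10 A11 (Suc 0) 0 = A10" "block2 A00 A01 A10 A11 (Suc 0) (Suc 0) = A11"
  by (simp_all add: block2_def)

lemma bmult_block2:
  "bmult K (block2 A00 A01 A10 A11) (block2 B00 B01 B10 B11) =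
     block2 (oadd (omult K A00 B00) (omult K A01 B10)) (oadd (omult K A00 B01) (omult K A01 B11))
            (oadd (omult K A10 B00) (omult K A11 B10)) (oadd (omult K A10 B01) (omult K A11 B11))"
  by (intro ext) (simp add: bmult_def block2_def omult_zero_left omult_zero_right oadd_def)

lemma btrace_block2: "btrace (block2 A00 A01 A10 A11) = oadd A00 A11"
  by (simp add: btrace_def block2_def)

lemma orestrict_block2:
  "orestrict K (block2 A00 A01 A10 A11 a b)
     = block2 (orestrict K A00) (orestrict K A01) (orestrict K A10) (orestrict K A11) a b"
  by (simp add: block2_def orestrict_zero)

lemma otensor_block2_left:
  "otensor (block2 A00 A01 A10 A11 a b) G
     = block2 (otensor A00 G) (otensor A01 G) (otensor A10 G) (otensor A11 G) a b"
  by (simp add: block2_def otensor_zero_left)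

lemma otensor_block2_right:
  "otensor G (block2 A00 A01 A10 A11 a b)
     = block2 (otensor G A00) (otensor G A01) (otensor G A10) (otensor G A11) a b"
  by (simp add: block2_def otensor_zero_right)

lemma bmult_otensor_oid_right:
  assumes "finite I" "finite J"
  shows "bmult (I \<times> J) (\<lambda>a b. otensor (A a b) (oid J)) (\<lambda>a b. otensor (B a b) (oid J))
       = (\<lambda>a b. otensor (bmult I A B a b) (oid J))"
  by (intro ext) (simp add: bmult_def otensor_omult assms oid_idem otensor_oadd_left)

lemma bmult_oid_otensor:
  assumes "finite I" "finite J"
  shows "bmult (I \<times> J) (\<lambda>a b. otensor (oid I) (A a b)) (\<lambda>a b. otensor (oid I) (B a b))
       = (\<lambda>a b. otensor (oid I) (bmult J A B a b))"
  by (intro ext) (simp add: bmult_def otensor_omult assms oid_idem otensor_oadd_right)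

lemma orestrict_bmult:
  "orestrict K (bmult K A B a c) = bmult K (\<lambda>a b. orestrict K (A a b)) (\<lambda>a b. orestrict K (B a b)) a c"
  by (simp add: bmult_def orestrict_oadd orestrict_omult orestrict_idem)

lemma btrace_conjugate:
  fixes P Pinv X :: "nat \<Rightarrow> nat \<Rightarrow> 'i oper" and E :: "'i oper" and m :: "nat \<Rightarrow> complex"
  defines "D \<equiv> block2 (osc (m 0) E) (\<lambda>_ _. 0) (\<lambda>_ _. 0) (osc (m 1) E)"
  assumes commute: "\<And>a b c d. omult K (P a b) (X c d) = omult K (X c d) (P a b)"
    and qtrace: "\<And>b c. b \<le> 1 \<Longrightarrow> c \<le> 1 \<Longrightarrow>
      oadd (osc (m 0) (omult K (P 0 b) (Pinv c 0))) (osc (m 1) (omult K (P 1 b) (Pinv c 1)))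
        = (if b = c then osc (m b) E else (\<lambda>_ _. 0))"
    and idem: "omult K E E = E"
  shows "btrace (bmult K P (bmult K X (bmult K Pinv D))) = btrace (bmult K X D)"
proof -
  define W where "W b c = oadd (osc (m 0) (omult K (X b c) (omult K (P 0 b) (omult K (Pinv c 0) E))))
                             (osc (m 1) (omult K (X b c) (omult K (P 1 b) (omult K (Pinv c 1) E))))"
    for b c
  have W_eq: "W b c = (if b = c then osc (m b) (omult K (X b b) E) else (\<lambda>_ _. 0))"
    if "b \<le> 1" "c \<le> 1" for b c
  proof -
    have "W b c = omult K (X b c) (omult K (oadd (osc (m 0) (omult K (P 0 b) (Pinv c 0)))
                                                (osc (m 1) (omult K (P 1 b) (Pinv c 1)))) E)"
      unfolding W_def
      by (simp add: omult_oadd_left omult_oadd_right omult_osc_left omult_osc_right omult_assoc)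
    then show ?thesis
      using qtrace[OF that] idem
      by (simp add: omult_osc_left omult_osc_right omult_zero_left omult_zero_right omult_assoc)
  qed
  have swap: "omult K (P a b) (omult K (X c d) Z) = omult K (X c d) (omult K (P a b) Z)" for a b c d Z
    by (simp add: omult_assoc[symmetric] commute)
  have "btrace (bmult K P (bmult K X (bmult K Pinv D))) = oadd (oadd (W 0 0) (W 1 1)) (oadd (W 0 1) (W 1 0))"
    unfolding D_def bmult_def btrace_def W_def
    by (intro ext) (simp add: omult_oadd_left omult_oadd_right omult_osc_left omult_osc_right
        omult_zero_left omult_zero_right oadd_zero_left oadd_zero_right swap oadd_def osc_def algebra_simps)
  then show ?thesis
    using W_eq[of 0 0] W_eq[of 0 1] W_eq[of 1 0] W_eq[of 1 1]
    by (simp add: D_def bmult_def btrace_def omult_osc_right omult_zero_right oadd_zero_left oadd_zero_right)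
qed


section \<open>Relations in a spin representation\<close>

lemma omult_diag_left:
  assumes "finite N"
  shows "omult N (orestrict N (\<lambda>i j. if i = j then d i else 0)) B x y = (if x \<in> N then d x * B x y else 0)"
proof -
  have "omult N (orestrict N (\<lambda>i j. if i = j then d i else 0)) B x y
      = (\<Sum>z\<in>N. if x = z then (if x \<in> N then d x * B x y else 0) else 0)"
    unfolding omult_def orestrict_def by (rule sum.cong) auto
  then show ?thesis
    using assms by simp
qed

lemma omult_diag_right:
  assumes "finite N"
  shows "omult N B (orestrict N (\<lambda>i j. if i = j then d i else 0)) x y = (if y \<in> N then B x y * d y else 0)"
proof -
  have "omult N B (orestrict N (\<lambda>i j. if i = j then d i else 0)) x y
      = (\<Sum>z\<in>N. if y = z then (if y \<in> N then B x y * d y else 0) else 0)"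
    unfolding omult_def orestrict_def by (rule sum.cong) auto
  then show ?thesis
    using assms by simp
qed

lemma Kop_diag: "Kop s n e = (\<lambda>i j. if i = j then s powi (e * (2 * int i - int n)) else 0)"
  by (intro ext) (simp add: Kop_def)

lemma Kop_mult_Kop:
  assumes "s \<noteq> 0"
  shows "omult {0..n} (orestrict {0..n} (Kop s n e)) (orestrict {0..n} (Kop s n e'))
       = orestrict {0..n} (Kop s n (e + e'))"
  by (intro ext) (simp add: Kop_diag omult_diag_left orestrict_def assms power_int_add distrib_right)

lemma Kop_zero: "orestrict {0..n} (Kop s n 0) = oid {0..n}"
  by (intro ext) (simp add: Kop_def orestrict_def oid_def)

lemma Kop_Fop_commute:
  assumes "s \<noteq> 0" and "s ^ 2 = q"
  shows "omult {0..n} (orestrict {0..n} (Kop s n e)) (orestrict {0..n} (Fop q n))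
       = osc (q powi (- e)) (omult {0..n} (orestrict {0..n} (Fop q n)) (orestrict {0..n} (Kop s n e)))"
proof (intro ext)
  fix x y
  have shift: "s powi (e * (2 * int x - int n)) = q powi (- e) * s powi (e * (2 * int (Suc x) - int n))"
  proof -
    have "q powi (- e) = s powi (- 2 * e)"
      using power_int_mult[of s 2 "- e"] assms(2) by simp
    moreover have "e * (2 * int x - int n) = - 2 * e + e * (2 * int (Suc x) - int n)"
      by (simp add: algebra_simps)
    ultimately show ?thesis
      by (metis assms(1) power_int_add)
  qed
  show "omult {0..n} (orestrict {0..n} (Kop s n e)) (orestrict {0..n} (Fop q n)) x y
      = osc (q powi (- e)) (omult {0..n} (orestrict {0..n} (Fop q n)) (orestrict {0..n} (Kop s n e))) x y"
    by (simp add: Kop_diag omult_diag_left omult_diag_right osc_def orestrict_def Fop_def shift)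
qed

text \<open>\<open>F e\<^sub>n\<^sub>+\<^sub>1\<close> carries the factor \<open>[0] = 0\<close>, so \<open>F\<close> does not leak out of the spin \<open>n/2\<close> block.\<close>
lemma Fop_outside:
  assumes "i \<le> n" and "\<not> j \<le> n"
  shows "Fop q n i j = 0"
proof (cases "j = Suc i")
  case True
  with assms have "i = n"
    by simp
  with True show ?thesis
    by (simp add: Fop_def qnum_def)
qed (simp add: Fop_def)


section \<open>L-operators\<close>

definition Lplus_block :: "complex \<Rightarrow> complex \<Rightarrow> (op1 \<Rightarrow> 'i oper) \<Rightarrow> nat \<Rightarrow> nat \<Rightarrow> nat \<Rightarrow> 'i oper" where
  "Lplus_block q s E n = block2 (E (Kop s n 1)) (osc ((q - inverse q) / s) (E (Fop q n)))
                                (\<lambda>_ _. 0) (E (Kop s n (-1)))"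

definition Lminus_block :: "complex \<Rightarrow> complex \<Rightarrow> (op1 \<Rightarrow> 'i oper) \<Rightarrow> nat \<Rightarrow> nat \<Rightarrow> nat \<Rightarrow> 'i oper" where
  "Lminus_block q s E n = block2 (E (Kop s n 1)) (\<lambda>_ _. 0)
                                 (osc ((q - inverse q) / s) (E (Eop n))) (E (Kop s n (-1)))"

text \<open>The off-diagonal entry is \<open>-((q - q\<^sup>-\<^sup>1)/s) K\<^sup>-\<^sup>1 F K = -((q - q\<^sup>-\<^sup>1)/s) q F\<close>.\<close>
definition Lplus_inv_block :: "complex \<Rightarrow> complex \<Rightarrow> (op1 \<Rightarrow> 'i oper) \<Rightarrow> nat \<Rightarrow> nat \<Rightarrow> nat \<Rightarrow> 'i oper" where
  "Lplus_inv_block q s E n = block2 (E (Kop s n (-1))) (osc (- ((q - inverse q) / s * q)) (E (Fop q n)))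
                                    (\<lambda>_ _. 0) (E (Kop s n 1))"

lemma Lplus_block_otensor_left:
  "Lplus_block q s (\<lambda>A. otensor (E A) G) n = (\<lambda>a b. otensor (Lplus_block q s E n a b) G)"
  by (intro ext) (simp add: Lplus_block_def otensor_block2_left otensor_osc_left otensor_zero_left)

lemma Lplus_inv_block_otensor_left:
  "Lplus_inv_block q s (\<lambda>A. otensor (E A) G) n = (\<lambda>a b. otensor (Lplus_inv_block q s E n a b) G)"
  by (intro ext) (simp add: Lplus_inv_block_def otensor_block2_left otensor_osc_left otensor_zero_left)

lemma Lplus_block_otensor_right:
  "Lplus_block q s (\<lambda>A. otensor G (E A)) n = (\<lambda>a b. otensor G (Lplus_block q s E n a b))"
  by (intro ext) (simp add: Lplus_block_def otensor_block2_right otensor_osc_right otensor_zero_right)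

lemma Lminus_block_otensor_right:
  "Lminus_block q s (\<lambda>A. otensor G (E A)) n = (\<lambda>a b. otensor G (Lminus_block q s E n a b))"
  by (intro ext) (simp add: Lminus_block_def otensor_block2_right otensor_osc_right otensor_zero_right)

lemma orestrict_Lplus_block:
  "orestrict {0..n} (Lplus_block q s (orestrict {0..n}) n a b) = Lplus_block q s (orestrict {0..n}) n a b"
  by (simp add: Lplus_block_def orestrict_block2 orestrict_osc orestrict_idem orestrict_zero)

lemma Lplus_block_inverse:
  fixes q s :: complex and n :: nat
  defines "P \<equiv> Lplus_block q s (orestrict {0..n}) n"
    and "Pinv \<equiv> Lplus_inv_block q s (orestrict {0..n}) n"
  assumes "s \<noteq> 0" and "s ^ 2 = q"
  shows "bmult {0..n} P Pinv = block2 (oid {0..n}) (\<lambda>_ _. 0) (\<lambda>_ _. 0) (oid {0..n})"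
    and "bmult {0..n} Pinv P = block2 (oid {0..n}) (\<lambda>_ _. 0) (\<lambda>_ _. 0) (oid {0..n})"
proof -
  have "q \<noteq> 0"
    using assms(3,4) by auto
  note KF = Kop_Fop_commute[OF assms(3,4)]
  note rules = P_def Pinv_def Lplus_block_def Lplus_inv_block_def bmult_block2
    Kop_mult_Kop[OF assms(3)] Kop_zero KF[where e=1] KF[where e="-1"]
    omult_osc_left omult_osc_right omult_zero_left omult_zero_right oadd_zero_left oadd_zero_right
    osc_osc oadd_osc_osc osc_eq_zero field_simps \<open>q \<noteq> 0\<close> assms(3)
  show "bmult {0..n} P Pinv = block2 (oid {0..n}) (\<lambda>_ _. 0) (\<lambda>_ _. 0) (oid {0..n})"
    by (simp add: rules)
  show "bmult {0..n} Pinv P = block2 (oid {0..n}) (\<lambda>_ _. 0) (\<lambda>_ _. 0) (oid {0..n})"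
    by (simp add: rules)
qed

lemma Lplus_block_qtrace:
  fixes q s :: complex and n :: nat
  defines "P \<equiv> Lplus_block q s (orestrict {0..n}) n"
    and "Pinv \<equiv> Lplus_inv_block q s (orestrict {0..n}) n"
  assumes "s \<noteq> 0" and "s ^ 2 = q" and "b \<le> 1" and "c \<le> 1"
  shows "oadd (osc q (omult {0..n} (P 0 b) (Pinv c 0))) (osc (inverse q) (omult {0..n} (P 1 b) (Pinv c 1)))
       = (if b = c then osc (if b = 0 then q else inverse q) (oid {0..n}) else (\<lambda>_ _. 0))"
proof -
  have "q \<noteq> 0"
    using assms(3,4) by auto
  note KF = Kop_Fop_commute[OF assms(3,4)]
  have "b = 0 \<or> b = 1" "c = 0 \<or> c = 1"
    using assms(5,6) by auto
  then show ?thesis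
    by (elim disjE) (simp_all add: P_def Pinv_def Lplus_block_def Lplus_inv_block_def
        Kop_mult_Kop[OF assms(3)] Kop_zero KF[where e="-1"]
        omult_osc_left omult_osc_right omult_zero_left omult_zero_right oadd_zero_left oadd_zero_right
        osc_osc osc_zero oadd_osc_osc osc_eq_zero field_simps \<open>q \<noteq> 0\<close> assms(3))
qed

lemma btrace_conjugate_Lplus:
  fixes q s :: complex and n :: nat and J :: "'b set" and Y :: "nat \<Rightarrow> nat \<Rightarrow> 'b oper"
  defines "P \<equiv> \<lambda>a b. otensor (Lplus_block q s (orestrict {0..n}) n a b) (oid J)"
    and "Pinv \<equiv> \<lambda>a b. otensor (Lplus_inv_block q s (orestrict {0..n}) n a b) (oid J)"
    and "X \<equiv> \<lambda>a b. otensor (oid {0..n}) (Y a b)"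
    and "D \<equiv> block2 (osc q (oid ({0..n} \<times> J))) (\<lambda>_ _. 0) (\<lambda>_ _. 0) (osc (inverse q) (oid ({0..n} \<times> J)))"
  assumes "s \<noteq> 0" and "s ^ 2 = q" and "finite J" and "\<And>a b. orestrict J (Y a b) = Y a b"
  shows "btrace (bmult ({0..n} \<times> J) P (bmult ({0..n} \<times> J) X (bmult ({0..n} \<times> J) Pinv D)))
       = btrace (bmult ({0..n} \<times> J) X D)"
proof -
  define m :: "nat \<Rightarrow> complex" where "m a = (if a = 0 then q else inverse q)" for a
  have fin: "finite {0..n}"
    by simp
  have "D = block2 (osc (m 0) (oid ({0..n} \<times> J))) (\<lambda>_ _. 0) (\<lambda>_ _. 0) (osc (m 1) (oid ({0..n} \<times> J)))"
    by (simp add: D_def m_def)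
  moreover have "omult ({0..n} \<times> J) (P a b) (X c d) = omult ({0..n} \<times> J) (X c d) (P a b)" for a b c d
    unfolding P_def X_def
    by (rule otensor_oid_commute) (simp_all add: assms(7,8) orestrict_Lplus_block)
  moreover have "oadd (osc (m 0) (omult ({0..n} \<times> J) (P 0 b) (Pinv c 0)))
                      (osc (m 1) (omult ({0..n} \<times> J) (P 1 b) (Pinv c 1)))
               = (if b = c then osc (m b) (oid ({0..n} \<times> J)) else (\<lambda>_ _. 0))"
    if "b \<le> 1" "c \<le> 1" for b c
  proof -
    have "oadd (osc (m 0) (omult ({0..n} \<times> J) (P 0 b) (Pinv c 0)))
               (osc (m 1) (omult ({0..n} \<times> J) (P 1 b) (Pinv c 1)))
        = otensor (oadd (osc q (omult {0..n} (Lplus_block q s (orestrict {0..n}) n 0 b)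
                                               (Lplus_inv_block q s (orestrict {0..n}) n c 0)))
                        (osc (inverse q) (omult {0..n} (Lplus_block q s (orestrict {0..n}) n 1 b)
                                                         (Lplus_inv_block q s (orestrict {0..n}) n c 1))))
                  (oid J)"
      by (simp add: P_def Pinv_def m_def otensor_omult fin assms(7) oid_idem otensor_oadd_left otensor_osc_left)
    then show ?thesis
      using Lplus_block_qtrace[OF assms(5,6) that]
      by (simp add: m_def oid_Times otensor_osc_left otensor_zero_left)
  qed
  moreover have "omult ({0..n} \<times> J) (oid ({0..n} \<times> J)) (oid ({0..n} \<times> J)) = oid ({0..n} \<times> J)"
    by (simp add: oid_idem assms(7))
  ultimately show ?thesis
    using btrace_conjugate[where m = m and E = "oid ({0..n} \<times> J)" and K = "{0..n} \<times> J"
        and P = P and X = X and Pinv = Pinv] by simp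
qed


section \<open>The transfer matrix\<close>

lemma omult_aux: "omult ({0..1} \<times> K) (aux A) (aux B) = aux (bmult K A B)"
proof (intro ext)
  fix x y :: idxA
  obtain a u c w where "x = (a, u)" "y = (c, w)"
    by (cases x, cases y) blast
  moreover have "{0..1::nat} = {0, 1}"
    by auto
  ultimately show "omult ({0..1} \<times> K) (aux A) (aux B) x y = aux (bmult K A B) x y"
    by (simp add: omult_def aux_def bmult_def oadd_def sum.cartesian_product')
qed

lemma trA_aux: "trA (aux A) = btrace A"
proof (intro ext)
  fix u v
  have "{0..1::nat} = {0, 1}"
    by auto
  then show "trA (aux A) u v = btrace A u v"
    by (simp add: trA_def aux_def btrace_def oadd_def)
qed

lemma orestrict_trA: "orestrict K (trA A) = trA (orestrict ({0..1} \<times> K) A)"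
  by (intro ext) (auto simp: orestrict_def trA_def)

lemma orestrict_aux_block2:
  "orestrict ({0..1} \<times> K) (aux (block2 A00 A01 A10 A11))
     = aux (block2 (orestrict K A00) (orestrict K A01) (orestrict K A10) (orestrict K A11))"
  by (intro ext) (auto simp: orestrict_def aux_def block2_def split: prod.splits)

lemma aux_block2_oid: "aux (block2 (oid K) (\<lambda>_ _. 0) (\<lambda>_ _. 0) (oid K)) = oid ({0..1} \<times> K)"
  by (intro ext) (auto simp: aux_def block2_def oid_def split: prod.splits)

lemma Lplus_aux: "Lplus q s emb n = aux (Lplus_block q s emb n)"
  unfolding Lplus_def Lplus_block_def
  by (rule arg_cong[where f = aux]) (intro ext, simp add: block2_def)

lemma Lminus_aux: "Lminus q s emb n = aux (Lminus_block q s emb n)"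
  unfolding Lminus_def Lminus_block_def
  by (rule arg_cong[where f = aux]) (intro ext, simp add: block2_def)

lemma orestrict_aux_Lplus_block:
  "orestrict ({0..1} \<times> K) (aux (Lplus_block q s E n)) = aux (Lplus_block q s (\<lambda>A. orestrict K (E A)) n)"
  unfolding Lplus_block_def orestrict_aux_block2 by (simp add: orestrict_osc orestrict_zero)

lemma orestrict_aux_Lminus_block:
  "orestrict ({0..1} \<times> K) (aux (Lminus_block q s E n)) = aux (Lminus_block q s (\<lambda>A. orestrict K (E A)) n)"
  unfolding Lminus_block_def orestrict_aux_block2 by (simp add: orestrict_osc orestrict_zero)

lemma orestrict_aux_Lplus_inv_block:
  "orestrict ({0..1} \<times> K) (aux (Lplus_inv_block q s E n)) = aux (Lplus_inv_block q s (\<lambda>A. orestrict K (E A)) n)"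
  unfolding Lplus_inv_block_def orestrict_aux_block2 by (simp add: orestrict_osc orestrict_zero)

lemma orestrict_Ma:
  "orestrict ({0..1} \<times> K) (Ma q) = aux (block2 (osc q (oid K)) (\<lambda>_ _. 0) (\<lambda>_ _. 0) (osc (inverse q) (oid K)))"
  by (intro ext) (auto simp: orestrict_def Ma_def aux_def block2_def osc_def oid_def split: prod.splits)

lemma orestrict_emb1: "orestrict (N1 \<times> N2 \<times> N3) (emb1 A) = otensor (orestrict N1 A) (oid (N2 \<times> N3))"
  by (intro ext) (auto simp: orestrict_def emb1_def otensor_def oid_def split: prod.splits)

lemma orestrict_emb2:
  "orestrict (N1 \<times> N2 \<times> N3) (emb2 A) = otensor (oid N1) (otensor (orestrict N2 A) (oid N3))"
  by (intro ext) (auto simp: orestrict_def emb2_def otensor_def oid_def split: prod.splits)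

lemma orestrict_emb3:
  "orestrict (N1 \<times> N2 \<times> N3) (emb3 A) = otensor (oid N1) (otensor (oid N2) (orestrict N3 A))"
  by (intro ext) (auto simp: orestrict_def emb3_def otensor_def oid_def split: prod.splits)

lemma Lplus_emb1_row_outside:
  "x \<notin> Aset (n1, n2, n3) \<Longrightarrow> z \<in> Aset (n1, n2, n3) \<Longrightarrow> Lplus q s emb1 n1 x z = 0"
  by (cases x; cases z) (auto simp: Lplus_def aux_def emb1_def Kop_def Fop_def osc_def Aset_def Jset_def)

lemma Lplus_emb1_column_outside:
  "z \<in> Aset (n1, n2, n3) \<Longrightarrow> y \<notin> Aset (n1, n2, n3) \<Longrightarrow> Lplus q s emb1 n1 z y = 0"
  by (cases y; cases z) (auto simp: Lplus_def aux_def emb1_def Kop_def Fop_outside osc_def Aset_def Jset_def)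

lemma oinv_Lplus_emb1:
  fixes q s :: complex and n1 n2 n3 :: nat
  defines "J23 \<equiv> {0..n2} \<times> {0..n3}"
  assumes "s \<noteq> 0" and "s ^ 2 = q"
  shows "oinv (Aset (n1, n2, n3)) (Lplus q s emb1 n1)
       = aux (Lplus_inv_block q s (\<lambda>A. orestrict (Jset (n1, n2, n3)) (emb1 A)) n1)"
proof -
  define P where "P = (\<lambda>a b. otensor (Lplus_block q s (orestrict {0..n1}) n1 a b) (oid J23))"
  define Pinv where "Pinv = (\<lambda>a b. otensor (Lplus_inv_block q s (orestrict {0..n1}) n1 a b) (oid J23))"
  have I: "Aset (n1, n2, n3) = {0..1} \<times> ({0..n1} \<times> J23)"
    by (simp add: Aset_def Jset_def J23_def)
  have fin: "finite {0..n1}" "finite J23"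
    by (simp_all add: J23_def)
  have "orestrict (Aset (n1, n2, n3)) (Lplus q s emb1 n1) = aux P"
    unfolding I Lplus_aux P_def Lplus_block_def orestrict_aux_block2 J23_def
    by (simp add: otensor_block2_left orestrict_emb1 orestrict_osc otensor_osc_left
        orestrict_zero otensor_zero_left)
  moreover have "oinv (Aset (n1, n2, n3)) (Lplus q s emb1 n1)
      = oinv (Aset (n1, n2, n3)) (orestrict (Aset (n1, n2, n3)) (Lplus q s emb1 n1))"
    by (rule oinv_orestrict) (simp_all add: Lplus_emb1_row_outside Lplus_emb1_column_outside)
  ultimately have "oinv (Aset (n1, n2, n3)) (Lplus q s emb1 n1) = oinv (Aset (n1, n2, n3)) (aux P)"
    by simp
  also have "\<dots> = aux Pinv"
  proof (rule oinv_eqI)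
    show "finite (Aset (n1, n2, n3))"
      by (simp add: I fin)
    show "orestrict (Aset (n1, n2, n3)) (aux Pinv) = aux Pinv"
      unfolding I Pinv_def Lplus_inv_block_def otensor_block2_left orestrict_aux_block2
      by (simp add: orestrict_otensor orestrict_oid orestrict_osc orestrict_idem orestrict_zero
          otensor_zero_left)
    have "bmult {0..n1} (Lplus_inv_block q s (orestrict {0..n1}) n1) (Lplus_block q s (orestrict {0..n1}) n1)
        = block2 (oid {0..n1}) (\<lambda>_ _. 0) (\<lambda>_ _. 0) (oid {0..n1})"
         "bmult {0..n1} (Lplus_block q s (orestrict {0..n1}) n1) (Lplus_inv_block q s (orestrict {0..n1}) n1)
        = block2 (oid {0..n1}) (\<lambda>_ _. 0) (\<lambda>_ _. 0) (oid {0..n1})"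
      using Lplus_block_inverse[OF assms(2,3)] by simp_all
    then show "omult (Aset (n1, n2, n3)) (aux Pinv) (aux P) = oid (Aset (n1, n2, n3))"
      and "omult (Aset (n1, n2, n3)) (aux P) (aux Pinv) = oid (Aset (n1, n2, n3))"
      unfolding I omult_aux P_def Pinv_def
      by (simp_all add: bmult_otensor_oid_right fin otensor_block2_left otensor_zero_left
          oid_Times[symmetric] aux_block2_oid)
  qed
  finally show ?thesis
    by (simp add: Pinv_def Jset_def J23_def orestrict_emb1 Lplus_inv_block_otensor_left)
qed

lemma btrace_L23_eq_Q23:
  fixes q s :: complex and n1 n2 n3 :: nat
  defines "J \<equiv> Jset (n1, n2, n3)"
  defines "E2 \<equiv> \<lambda>A. orestrict J (emb2 A)" and "E3 \<equiv> \<lambda>A. orestrict J (emb3 A)"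
  assumes "s \<noteq> 0" and "s ^ 2 = q"
  shows "btrace (bmult J (bmult J (Lplus_block q s E2 n2) (bmult J (Lplus_block q s E3 n3)
            (bmult J (Lminus_block q s E3 n3) (Lminus_block q s E2 n2))))
          (block2 (osc q (oid J)) (\<lambda>_ _. 0) (\<lambda>_ _. 0) (osc (inverse q) (oid J))))
       = orestrict J (Q23 q s (n1, n2, n3))"
proof -
  note KF = Kop_Fop_commute[OF assms(4,5)]
  have coef: "q * ((q - inverse q) / s * ((q - inverse q) / s)) = (q - inverse q)\<^sup>2"
    using assms(4,5) by (simp add: field_simps power2_eq_square)
  note linearity = bmult_block2 btrace_block2 otensor_omult finite_atLeastAtMost finite_SigmaI
    omult_oadd_left omult_oadd_right omult_osc_left omult_osc_right omult_zero_left omult_zero_right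
    oadd_zero_left oadd_zero_right otensor_osc_left otensor_osc_right otensor_zero_left otensor_zero_right
    osc_osc osc_oadd orestrict_oadd orestrict_osc orestrict_omult omult_assoc
  note relations = oid_idem omult_oid_left omult_oid_right omult_chain[OF omult_oid_left[OF finite_atLeastAtMost]]
    Kop_mult_Kop[OF assms(4)] Kop_zero KF[where e=1] KF[where e="-1"]
    omult_chain[OF Kop_mult_Kop[OF assms(4)]] omult_chain[OF KF[where e=1]] omult_chain[OF KF[where e="-1"]]
  show ?thesis
    unfolding J_def E2_def E3_def Jset_def prod.case Q23_def Let_def Lplus_block_def Lminus_block_def
    by (simp only: orestrict_emb2 orestrict_emb3 oid_Times linearity relations coef)
      (intro ext, simp add: oadd_def osc_def algebra_simps)
qed

lemma transfer_RHS_eq_btrace: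
  fixes q s :: complex and n1 n2 n3 :: nat
  defines "J \<equiv> Jset (n1, n2, n3)"
  defines "E2 \<equiv> \<lambda>A. orestrict J (emb2 A)" and "E3 \<equiv> \<lambda>A. orestrict J (emb3 A)"
  assumes "s \<noteq> 0" and "s ^ 2 = q" and "u \<in> J" and "v \<in> J"
  shows "transfer_RHS q s (n1, n2, n3) u v
       = btrace (bmult J (bmult J (Lplus_block q s E2 n2) (bmult J (Lplus_block q s E3 n3)
            (bmult J (Lminus_block q s E3 n3) (Lminus_block q s E2 n2))))
          (block2 (osc q (oid J)) (\<lambda>_ _. 0) (\<lambda>_ _. 0) (osc (inverse q) (oid J)))) u v"
    (is "_ = btrace (bmult J ?X ?D) u v")
proof -
  define I where "I = Aset (n1, n2, n3)"
  define E1 where "E1 = (\<lambda>A. orestrict J (emb1 A))"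
  define J23 where "J23 = {0..n2} \<times> {0..n3}"
  define Y where "Y = bmult J23 (Lplus_block q s (\<lambda>A. otensor (orestrict {0..n2} A) (oid {0..n3})) n2)
    (bmult J23 (Lplus_block q s (\<lambda>A. otensor (oid {0..n2}) (orestrict {0..n3} A)) n3)
    (bmult J23 (Lminus_block q s (\<lambda>A. otensor (oid {0..n2}) (orestrict {0..n3} A)) n3)
               (Lminus_block q s (\<lambda>A. otensor (orestrict {0..n2} A) (oid {0..n3})) n2)))"
  have I: "I = {0..1} \<times> J" and J: "J = {0..n1} \<times> J23"
    by (simp_all add: I_def J_def J23_def Aset_def Jset_def)
  have fin: "finite J23"
    by (simp add: J23_def)
  have "transfer_RHS q s (n1, n2, n3) u v
      = orestrict J (trA (omult I (Lplus q s emb1 n1)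
          (omult I (omult I (Lplus q s emb2 n2) (omult I (Lplus q s emb3 n3)
                     (omult I (Lminus q s emb3 n3) (Lminus q s emb2 n2))))
            (omult I (oinv I (Lplus q s emb1 n1)) (Ma q))))) u v"
    using assms(6,7) by (simp add: transfer_RHS_def Let_def I_def omult_assoc orestrict_def)
  also have "\<dots> = trA (orestrict I (omult I (Lplus q s emb1 n1)
          (omult I (omult I (Lplus q s emb2 n2) (omult I (Lplus q s emb3 n3)
                     (omult I (Lminus q s emb3 n3) (Lminus q s emb2 n2))))
            (omult I (oinv I (Lplus q s emb1 n1)) (Ma q))))) u v"
    by (simp only: orestrict_trA I)
  also have "\<dots> = btrace (bmult J (Lplus_block q s E1 n1) (bmult J ?X (bmult J (Lplus_inv_block q s E1 n1) ?D))) u v"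
    unfolding oinv_Lplus_emb1[OF assms(4,5), of n1 n2 n3, folded I_def J_def]
    unfolding I orestrict_omult
    unfolding Lplus_aux Lminus_aux
    unfolding orestrict_aux_Lplus_block orestrict_aux_Lminus_block orestrict_aux_Lplus_inv_block orestrict_Ma
    unfolding omult_aux trA_aux
    by (simp add: orestrict_idem E1_def E2_def E3_def)
  also have "\<dots> = btrace (bmult J ?X ?D) u v"
  proof -
    have "Lplus_block q s E1 n1 = (\<lambda>a b. otensor (Lplus_block q s (orestrict {0..n1}) n1 a b) (oid J23))"
      "Lplus_inv_block q s E1 n1 = (\<lambda>a b. otensor (Lplus_inv_block q s (orestrict {0..n1}) n1 a b) (oid J23))"
      by (simp_all add: E1_def J J23_def orestrict_emb1 Lplus_block_otensor_left Lplus_inv_block_otensor_left)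
    moreover have "?X = (\<lambda>a b. otensor (oid {0..n1}) (Y a b))"
      by (simp add: E2_def E3_def J J23_def Y_def orestrict_emb2 orestrict_emb3
          Lplus_block_otensor_right Lminus_block_otensor_right bmult_oid_otensor)
    moreover have "orestrict J23 (Y a b) = Y a b" for a b
      by (simp add: Y_def J23_def orestrict_bmult Lplus_block_def Lminus_block_def orestrict_block2
          orestrict_otensor orestrict_idem orestrict_oid orestrict_osc orestrict_zero)
    ultimately show ?thesis
      using btrace_conjugate_Lplus[OF assms(4,5) fin, of Y n1] by (simp add: J)
  qed
  finally show ?thesis .
qed

theorem corollaryB2:
  fixes q s :: complex and n1 n2 n3 :: nat
  assumes "s ^ 2 = q" and "q \<noteq> 0" and "\<forall>k::nat. k > 0 \<longrightarrow> q ^ k \<noteq> 1"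
  shows "\<forall>u\<in>Jset (n1, n2, n3). \<forall>v\<in>Jset (n1, n2, n3).
           Q23 q s (n1, n2, n3) u v = transfer_RHS q s (n1, n2, n3) u v"
proof (intro ballI)
  fix u v
  assume uv: "u \<in> Jset (n1, n2, n3)" "v \<in> Jset (n1, n2, n3)"
  have s: "s \<noteq> 0"
    using assms(1,2) by auto
  have "transfer_RHS q s (n1, n2, n3) u v
      = orestrict (Jset (n1, n2, n3)) (Q23 q s (n1, n2, n3)) u v"
    unfolding transfer_RHS_eq_btrace[OF s assms(1) uv] btrace_L23_eq_Q23[OF s assms(1)] ..
  then show "Q23 q s (n1, n2, n3) u v = transfer_RHS q s (n1, n2, n3) u v"
    using uv by (simp add: orestrict_def)
qed

end
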